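(* Let $\gamma>0$, $c_u>0$, $c_a>0$, $c_s>0$ and $R^*=\log\left(\frac{c_u}{c_a}+1\right)$. Consider the optimization problem $$\min_{0\le s\le 1,\ T\ge 0}\ J_i(s,T):=\gamma(1-s)R^*+c_s\,(sR^*-T)$$ subject to: (IR-$u$) $T\le R^*$; (IC-$u$) $s\ge T/R^*$; (IR-$i$) $T-sR^*\ge 0$; (F-$i$) $s>1-\frac{1}{\gamma R^*}$. Then the optimal insurance policy is $s^*=1$, $T^*=R^*=\log\left(\frac{c_u}{c_a}+1\right)$.
   Context: $\log$ is the natural logarithm. $s$ is the coverage level and $T$ the subscription fee of an insurance policy; $c_s$ is a trade-off parameter of the insurer between the user's average effective loss and the insurer's profit. *)

theory Defs
  imports Complex_Main
begin

definition Rstar :: "real \<Rightarrow> real \<Rightarrow> real" where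
  "Rstar c_u c_a = ln (c_u / c_a + 1)"

definition J_i :: "real \<Rightarrow> real \<Rightarrow> real \<Rightarrow> real \<Rightarrow> real \<Rightarrow> real" where
  "J_i \<gamma> c_s R s T = \<gamma> * (1 - s) * R + c_s * (s * R - T)"

definition feasible :: "real \<Rightarrow> real \<Rightarrow> real \<Rightarrow> real \<Rightarrow> bool" where
  "feasible \<gamma> R s T \<longleftrightarrow>
     0 \<le> s \<and> s \<le> 1 \<and> T \<ge> 0 \<and>
     T \<le> R \<and>
     s \<ge> T / R \<and>
     T - s * R \<ge> 0 \<and>
     s > 1 - 1 / (\<gamma> * R)"

end

theory Submission
  imports Defs
begin

text \<open>Constraints (IC-u) and (IR-i) pinch the fee to \<open>T = s R\<close>, so on the feasible set the
  insurer's profit term \<open>c_s (s R - T)\<close> vanishes and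
  \<open>J_i = \<gamma> (1 - s) R \<ge> 0\<close>. The value \<open>0\<close> is attained exactly at full coverage \<open>s = 1\<close>,
  which forces \<open>T = R\<close>.\<close>

lemma Rstar_pos:
  assumes "c_u > 0" and "c_a > 0"
  shows "Rstar c_u c_a > 0"
proof -
  have "c_u / c_a > 0"
    using assms by simp
  then show ?thesis
    by (simp add: Rstar_def)
qed

lemma feasible_fee_eq:
  assumes "R > 0" and "feasible \<gamma> R s T"
  shows "T = s * R"
proof -
  have "T / R \<le> s" and "s * R \<le> T"
    using assms(2) by (auto simp: feasible_def)
  moreover have "T \<le> s * R"
    using \<open>T / R \<le> s\<close> \<open>R > 0\<close> by (simp add: divide_le_eq)
  ultimately show ?thesis by simp
qed

lemma feasible_full_coverage:
  assumes "\<gamma> > 0" and "R > 0"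
  shows "feasible \<gamma> R 1 R"
  using assms by (simp add: feasible_def)

lemma J_i_feasible:
  assumes "R > 0" and "feasible \<gamma> R s T"
  shows "J_i \<gamma> c_s R s T = \<gamma> * (1 - s) * R"
  using feasible_fee_eq[OF assms] by (simp add: J_i_def)

lemma J_i_feasible_nonneg:
  assumes "\<gamma> > 0" and "R > 0" and "feasible \<gamma> R s T"
  shows "J_i \<gamma> c_s R s T \<ge> 0"
  using assms J_i_feasible[OF assms(2,3)] by (simp add: feasible_def)

lemma J_i_feasible_eq_0_iff:
  assumes "\<gamma> > 0" and "R > 0" and "feasible \<gamma> R s T"
  shows "J_i \<gamma> c_s R s T = 0 \<longleftrightarrow> s = 1"
  using assms J_i_feasible[OF assms(2,3)] by simp

lemma feasible_argmin_J_i: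
  fixes \<gamma> R c_s :: real
  assumes "\<gamma> > 0" and "R > 0"
  shows "{(s, T). feasible \<gamma> R s T \<and>
           (\<forall>s' T'. feasible \<gamma> R s' T' \<longrightarrow> J_i \<gamma> c_s R s T \<le> J_i \<gamma> c_s R s' T')}
         = {(1, R)}"
proof safe
  fix s T
  assume feas: "feasible \<gamma> R s T"
    and opt: "\<forall>s' T'. feasible \<gamma> R s' T' \<longrightarrow> J_i \<gamma> c_s R s T \<le> J_i \<gamma> c_s R s' T'"
  have "J_i \<gamma> c_s R s T \<le> J_i \<gamma> c_s R 1 R"
    using opt feasible_full_coverage[OF assms] by blast
  also have "\<dots> = 0"
    by (simp add: J_i_def)
  finally have "J_i \<gamma> c_s R s T = 0"
    using J_i_feasible_nonneg[OF assms feas, of c_s] by simp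
  then show s: "s = 1"
    using J_i_feasible_eq_0_iff[OF assms feas] by simp
  show "T = R"
    using feasible_fee_eq[OF \<open>R > 0\<close> feas] s by simp
next
  show "feasible \<gamma> R 1 R"
    using feasible_full_coverage[OF assms] .
next
  fix s' T'
  assume "feasible \<gamma> R s' T'"
  then show "J_i \<gamma> c_s R 1 R \<le> J_i \<gamma> c_s R s' T'"
    using J_i_feasible_nonneg[OF assms] by (simp add: J_i_def)
qed

theorem proposition4:
  fixes \<gamma> c_u c_a c_s :: real
  assumes "\<gamma> > 0" and "c_u > 0" and "c_a > 0" and "c_s > 0"
  shows "{(s, T). feasible \<gamma> (Rstar c_u c_a) s T \<and>
           (\<forall>s' T'. feasible \<gamma> (Rstar c_u c_a) s' T' \<longrightarrow>
              J_i \<gamma> c_s (Rstar c_u c_a) s T \<le> J_i \<gamma> c_s (Rstar c_u c_a) s' T')}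
         = {(1, ln (c_u / c_a + 1))}"
  using feasible_argmin_J_i[OF \<open>\<gamma> > 0\<close> Rstar_pos[OF \<open>c_u > 0\<close> \<open>c_a > 0\<close>]]
  by (simp add: Rstar_def)

end
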